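(* Let $L$ be a finite set of axis-aligned line segments in the plane, let $\mathcal{C}$ be the collection of associated subsets of the rectangular cells of the arrangement of $L$, and let $k\ge 0$ be an integer. Let $\mathcal{C}_1$ be obtained from $\mathcal{C}$ by, for every pair of segments $\ell,\ell'$ both contained in more than $2k$ subsets of $\mathcal{C}$, adding the subset $\{\ell,\ell'\}$ and removing all subsets containing both $\ell$ and $\ell'$. Let $\mathcal{C}_2$ be obtained from $\mathcal{C}_1$ by, for each segment $\ell$ contained in more than $2k^2$ subsets of $\mathcal{C}_1$, replacing all these subsets by the subset $\{\ell\}$. Then a set $L'\subseteq L$ with $|L'| \le k$ is a minimum-size cover of $\mathcal{C}_1$ if and only if it is a minimum-size cover of $\mathcal{C}_2$.
   Context: A cell of the arrangement of $L$ is a maximal connected region of the plane not intersected by any segment of $L$. A cell is rectangular if its boundary is formed by exactly four segments of $L$; its associated subset is the set of these four bounding segments. A set $L'\subseteq L$ is a cover of a collection $\mathcal{D}$ of subsets of $L$ if every member of $\mathcal{D}$ contains at least one element of $L'$. *)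

theory Defs
  imports "HOL-Analysis.Analysis"
begin

type_synonym point = "real \<times> real"
type_synonym seg = "point set"

definition axis_segment :: "seg \<Rightarrow> bool" where
  "axis_segment s \<longleftrightarrow> (\<exists>a b. a \<noteq> b \<and> (fst a = fst b \<or> snd a = snd b) \<and> s = closed_segment a b)"

definition cell :: "seg set \<Rightarrow> point set \<Rightarrow> bool" where
  "cell L C \<longleftrightarrow> C \<in> components (- \<Union>L)"

text \<open>Segments forming the boundary of a cell: those sharing a non-degenerate piece with it.\<close>
definition bounding_segs :: "seg set \<Rightarrow> point set \<Rightarrow> seg set" where
  "bounding_segs L C = {l \<in> L. infinite (l \<inter> frontier C)}"

definition rect_cell :: "seg set \<Rightarrow> point set \<Rightarrow> bool" where
  "rect_cell L C \<longleftrightarrow> cell L C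
     \<and> (\<exists>a b c d. a < c \<and> b < d \<and> C = {(x, y). a < x \<and> x < c \<and> b < y \<and> y < d})
     \<and> frontier C \<subseteq> \<Union>(bounding_segs L C)
     \<and> card (bounding_segs L C) = 4"

definition rect_subsets :: "seg set \<Rightarrow> seg set set" where
  "rect_subsets L = bounding_segs L ` {C. rect_cell L C}"

definition heavy_pairs :: "nat \<Rightarrow> seg set \<Rightarrow> seg set set \<Rightarrow> seg set set" where
  "heavy_pairs k L D = {{l, l'} | l l'. l \<in> L \<and> l' \<in> L \<and> l \<noteq> l'
                          \<and> card {S \<in> D. l \<in> S \<and> l' \<in> S} > 2 * k}"

definition reduce1 :: "nat \<Rightarrow> seg set \<Rightarrow> seg set set \<Rightarrow> seg set set" where
  "reduce1 k L D = {S \<in> D. \<not> (\<exists>P \<in> heavy_pairs k L D. P \<subseteq> S)} \<union> heavy_pairs k L D"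

definition heavy_segs :: "nat \<Rightarrow> seg set \<Rightarrow> seg set set \<Rightarrow> seg set" where
  "heavy_segs k L D = {l \<in> L. card {S \<in> D. l \<in> S} > 2 * k^2}"

definition reduce2 :: "nat \<Rightarrow> seg set \<Rightarrow> seg set set \<Rightarrow> seg set set" where
  "reduce2 k L D = {S \<in> D. S \<inter> heavy_segs k L D = {}} \<union> {{l} | l. l \<in> heavy_segs k L D}"

definition is_cover :: "seg set \<Rightarrow> seg set set \<Rightarrow> seg set \<Rightarrow> bool" where
  "is_cover L D L' \<longleftrightarrow> L' \<subseteq> L \<and> (\<forall>S \<in> D. S \<inter> L' \<noteq> {})"

definition is_min_cover :: "seg set \<Rightarrow> seg set set \<Rightarrow> seg set \<Rightarrow> bool" where
  "is_min_cover L D L' \<longleftrightarrow> is_cover L D L' \<and> (\<forall>L''. is_cover L D L'' \<longrightarrow> card L' \<le> card L'')"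

end

theory Submission
  imports Defs
begin

text \<open>After the first reduction two distinct segments lie together in at most \<open>2k\<close> sets, so
  a cover by at most \<open>k\<close> segments that misses a segment \<open>l\<close> hits at most \<open>2k\<^sup>2\<close> of the sets
  containing \<open>l\<close>. Hence every such cover contains all segments replaced in the second reduction,
  and \<open>\<C>\<^sub>1\<close>, \<open>\<C>\<^sub>2\<close> have the same covers of size at most \<open>k\<close>; since every cover of \<open>\<C>\<^sub>2\<close> also covers
  \<open>\<C>\<^sub>1\<close>, the minimum covers of size at most \<open>k\<close> agree.\<close>

lemma reduce1_subset_Pow:
  assumes "D \<subseteq> Pow L"
  shows "reduce1 k L D \<subseteq> Pow L"
  using assms unfolding reduce1_def heavy_pairs_def by auto

lemma card_reduce1_pair_le:
  assumes fin: "finite L" and D: "D \<subseteq> Pow L"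
    and "l \<in> L" "m \<in> L" "l \<noteq> m" "k \<ge> 1"
  shows "card {S \<in> reduce1 k L D. l \<in> S \<and> m \<in> S} \<le> 2 * k"
proof -
  have heavy_pair_eq: "P = {l, m}" if "P \<in> heavy_pairs k L D" "l \<in> P" "m \<in> P" for P
    using that \<open>l \<noteq> m\<close> unfolding heavy_pairs_def by auto
  show ?thesis
  proof (cases "{l, m} \<in> heavy_pairs k L D")
    case True
    have "S = {l, m}" if "S \<in> reduce1 k L D" "l \<in> S" "m \<in> S" for S
    proof -
      have "S \<in> heavy_pairs k L D"
        using that True unfolding reduce1_def by auto
      then show ?thesis
        using heavy_pair_eq that(2,3) by blast
    qed
    then have "{S \<in> reduce1 k L D. l \<in> S \<and> m \<in> S} \<subseteq> {{l, m}}"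
      by blast
    then have "card {S \<in> reduce1 k L D. l \<in> S \<and> m \<in> S} \<le> card {{l, m}}"
      by (intro card_mono) auto
    then show ?thesis using \<open>k \<ge> 1\<close> by simp
  next
    case False
    then have light: "\<not> card {S \<in> D. l \<in> S \<and> m \<in> S} > 2 * k"
      using assms(3-5) unfolding heavy_pairs_def by blast
    have "S \<in> D" if "S \<in> reduce1 k L D" "l \<in> S" "m \<in> S" for S
    proof -
      have "S \<notin> heavy_pairs k L D"
        using False heavy_pair_eq that(2,3) by blast
      then show ?thesis
        using that(1) unfolding reduce1_def by blast
    qed
    then have "{S \<in> reduce1 k L D. l \<in> S \<and> m \<in> S} \<subseteq> {S \<in> D. l \<in> S \<and> m \<in> S}"
      by blast
    moreover have "finite {S \<in> D. l \<in> S \<and> m \<in> S}"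
      by (rule finite_subset[of _ "Pow L"]) (use D fin in auto)
    ultimately have "card {S \<in> reduce1 k L D. l \<in> S \<and> m \<in> S} \<le> card {S \<in> D. l \<in> S \<and> m \<in> S}"
      by (rule card_mono[rotated])
    with light show ?thesis by linarith
  qed
qed

lemma heavy_seg_in_small_cover:
  assumes fin: "finite L" and D: "D \<subseteq> Pow L"
    and cov: "is_cover L (reduce1 k L D) X" and "card X \<le> k"
    and heavy: "l \<in> heavy_segs k L (reduce1 k L D)"
  shows "l \<in> X"
proof (rule ccontr)
  assume "l \<notin> X"
  let ?C = "reduce1 k L D"
  have "X \<subseteq> L" using cov unfolding is_cover_def by auto
  then have "finite X" using fin finite_subset by blast
  have "l \<in> L" and big: "card {S \<in> ?C. l \<in> S} > 2 * k^2"
    using heavy unfolding heavy_segs_def by auto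
  have split: "{S \<in> ?C. l \<in> S} \<subseteq> (\<Union>m\<in>X. {S \<in> ?C. l \<in> S \<and> m \<in> S})"
    using cov unfolding is_cover_def by blast
  have "finite (\<Union>m\<in>X. {S \<in> ?C. l \<in> S \<and> m \<in> S})"
    by (rule finite_subset[of _ "Pow L"]) (use reduce1_subset_Pow[OF D] fin in auto)
  from card_mono[OF this split]
  have "card {S \<in> ?C. l \<in> S} \<le> card (\<Union>m\<in>X. {S \<in> ?C. l \<in> S \<and> m \<in> S})" .
  also have "\<dots> \<le> (\<Sum>m\<in>X. card {S \<in> ?C. l \<in> S \<and> m \<in> S})"
    using \<open>finite X\<close> by (rule card_UN_le)
  also have "\<dots> \<le> (\<Sum>m\<in>X. 2 * k)"
  proof (rule sum_mono)
    fix m assume "m \<in> X"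
    then have "m \<in> L" "l \<noteq> m"
      using \<open>X \<subseteq> L\<close> \<open>l \<notin> X\<close> by auto
    moreover have "k \<ge> 1"
      using \<open>m \<in> X\<close> \<open>finite X\<close> \<open>card X \<le> k\<close> card_0_eq by fastforce
    ultimately show "card {S \<in> ?C. l \<in> S \<and> m \<in> S} \<le> 2 * k"
      by (rule card_reduce1_pair_le[OF fin D \<open>l \<in> L\<close>])
  qed
  also have "\<dots> \<le> k * (2 * k)"
    using \<open>card X \<le> k\<close> by simp
  also have "\<dots> = 2 * k^2"
    by (simp add: power2_eq_square)
  finally show False
    using big by linarith
qed

lemma is_cover_reduce2_imp:
  assumes cov: "is_cover L (reduce2 k L C) X"
  shows "is_cover L C X"
  unfolding is_cover_def
proof
  show "X \<subseteq> L"
    using cov unfolding is_cover_def by blast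
  show "\<forall>S \<in> C. S \<inter> X \<noteq> {}"
  proof
    fix S assume "S \<in> C"
    show "S \<inter> X \<noteq> {}"
    proof (cases "S \<inter> heavy_segs k L C = {}")
      case True
      then have "S \<in> reduce2 k L C"
        using \<open>S \<in> C\<close> unfolding reduce2_def by blast
      then show ?thesis
        using cov unfolding is_cover_def by blast
    next
      case False
      then obtain l where "l \<in> S" "l \<in> heavy_segs k L C"
        by blast
      then have "{l} \<in> reduce2 k L C"
        unfolding reduce2_def by blast
      then show ?thesis
        using cov \<open>l \<in> S\<close> unfolding is_cover_def by blast
    qed
  qed
qed

lemma is_cover_reduce2_reduce1_if_small:
  assumes "finite L" "D \<subseteq> Pow L"
    and cov: "is_cover L (reduce1 k L D) X" and "card X \<le> k"
  shows "is_cover L (reduce2 k L (reduce1 k L D)) X"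
proof -
  have "heavy_segs k L (reduce1 k L D) \<subseteq> X"
    using heavy_seg_in_small_cover[OF assms] by blast
  then show ?thesis
    using cov unfolding is_cover_def reduce2_def by blast
qed

lemma is_min_cover_iff_if_small_covers_agree:
  assumes covers2: "\<And>X. is_cover L D2 X \<Longrightarrow> is_cover L D1 X"
    and covers1: "\<And>X. is_cover L D1 X \<Longrightarrow> card X \<le> k \<Longrightarrow> is_cover L D2 X"
    and "card L' \<le> k"
  shows "is_min_cover L D1 L' \<longleftrightarrow> is_min_cover L D2 L'"
proof
  assume min1: "is_min_cover L D1 L'"
  then have "is_cover L D1 L'"
    by (simp add: is_min_cover_def)
  then have "is_cover L D2 L'"
    using \<open>card L' \<le> k\<close> by (rule covers1)
  moreover have "card L' \<le> card X" if "is_cover L D2 X" for X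
    using min1 covers2[OF that] unfolding is_min_cover_def by blast
  ultimately show "is_min_cover L D2 L'"
    unfolding is_min_cover_def by blast
next
  assume min2: "is_min_cover L D2 L'"
  then have "is_cover L D1 L'"
    using covers2 unfolding is_min_cover_def by blast
  moreover have "card L' \<le> card X" if "is_cover L D1 X" for X
  proof (rule ccontr)
    assume smaller: "\<not> card L' \<le> card X"
    then have "card X \<le> k"
      using \<open>card L' \<le> k\<close> by simp
    with that have "is_cover L D2 X"
      by (rule covers1)
    with min2 smaller show False
      unfolding is_min_cover_def by blast
  qed
  ultimately show "is_min_cover L D1 L'"
    unfolding is_min_cover_def by blast
qed

theorem lemma4:
  fixes L L' :: "seg set" and k :: nat
  assumes "finite L"
    and "\<forall>l \<in> L. axis_segment l"
    and "L' \<subseteq> L"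
    and "card L' \<le> k"
  shows "is_min_cover L (reduce1 k L (rect_subsets L)) L'
     \<longleftrightarrow> is_min_cover L (reduce2 k L (reduce1 k L (rect_subsets L))) L'"
proof (rule is_min_cover_iff_if_small_covers_agree)
  have "rect_subsets L \<subseteq> Pow L"
    unfolding rect_subsets_def bounding_segs_def by auto
  then show "is_cover L (reduce2 k L (reduce1 k L (rect_subsets L))) X"
    if "is_cover L (reduce1 k L (rect_subsets L)) X" "card X \<le> k" for X
    using is_cover_reduce2_reduce1_if_small \<open>finite L\<close> that by blast
qed (fact is_cover_reduce2_imp \<open>card L' \<le> k\<close>)+

end
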